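(* Let $k,s$ be integers with $k\geq 3$ and $s\geq 2$. Then: (1) $\mathrm{GR}_{3}(\vee_2:\mathcal{C}_s)=2s-1$. (2) The pair $(\vee_2,\mathcal{C}_s)$ is $(\vee_2:\mathcal{C}_s)_4$-good for $s\in\{2,3\}$, and $\mathrm{GR}_{4}(\vee_2:\mathcal{C}_s)=s$ for all $s\geq 4$. (3) If $k\geq 5$, the pair $(\vee_2,\mathcal{C}_s)$ is $(\vee_2:\mathcal{C}_s)_k$-good.
   Context: $\mathcal{B}_N$ denotes the Boolean lattice of all subsets of $[N]$ ordered by inclusion. For posets $\mathcal{P},\mathcal{Q}$, an induced copy of $\mathcal{P}$ in $\mathcal{Q}$ is the image of an injection $f:\mathcal{P}\to\mathcal{Q}$ with $f(X)\le f(Y)$ iff $X\le Y$. $\mathcal{C}_t$ is the $t$-element chain. $\vee_2$ is the poset on three elements $X_0,X_1,X_2$ with $X_0<X_1$, $X_0<X_2$ and $X_1,X_2$ incomparable. A $k$-coloring of $\mathcal{B}_N$ is exact if it uses colors from $[k]$ and every color is used at least once. Monochromatic: all sets share one color; rainbow: all sets have pairwise distinct colors. The pair $(\mathcal{Q},\mathcal{P})$ is $(\mathcal{Q}:\mathcal{P})_k$-good if for every positive integer $N$, every exact $k$-coloring of $\mathcal{B}_N$ contains a rainbow induced copy of $\mathcal{Q}$ or a monochromatic induced copy of $\mathcal{P}$. For a pair that is not good, $\mathrm{GR}_k(\mathcal{Q}:\mathcal{P})$ is the smallest integer $n$ such that for every $N\ge n$, every exact $k$-coloring of $\mathcal{B}_N$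 contains a rainbow induced copy of $\mathcal{Q}$ or a monochromatic induced copy of $\mathcal{P}$. *)

theory Defs
  imports Main
begin

type_synonym 'a poset = "'a set \<times> ('a \<Rightarrow> 'a \<Rightarrow> bool)"

text \<open>The Boolean lattice B_N: all subsets of [N], here represented as subsets of {0..<N}.\<close>
definition boolean_lattice :: "nat \<Rightarrow> nat set set" where
  "boolean_lattice N = Pow {0..<N}"

definition induced_copy :: "'a poset \<Rightarrow> nat \<Rightarrow> nat set set \<Rightarrow> bool" where
  "induced_copy P N S \<longleftrightarrow>
     (\<exists>f. inj_on f (fst P) \<and> f ` fst P \<subseteq> boolean_lattice N \<and>
          (\<forall>x\<in>fst P. \<forall>y\<in>fst P. (f x \<subseteq> f y \<longleftrightarrow> snd P x y)) \<and> S = f ` fst P)"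

definition chain_poset :: "nat \<Rightarrow> nat poset" where
  "chain_poset t = ({0..<t}, (\<le>))"

definition vee2 :: "nat poset" where
  "vee2 = ({0, 1, 2}, (\<lambda>x y. x = y \<or> x = 0))"

definition exact_coloring :: "nat \<Rightarrow> nat \<Rightarrow> (nat set \<Rightarrow> nat) \<Rightarrow> bool" where
  "exact_coloring k N c \<longleftrightarrow> c ` boolean_lattice N = {1..k}"

definition monochromatic :: "(nat set \<Rightarrow> nat) \<Rightarrow> nat set set \<Rightarrow> bool" where
  "monochromatic c S \<longleftrightarrow> (\<forall>x\<in>S. \<forall>y\<in>S. c x = c y)"

definition rainbow :: "(nat set \<Rightarrow> nat) \<Rightarrow> nat set set \<Rightarrow> bool" where
  "rainbow c S \<longleftrightarrow> inj_on c S"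

definition gr_property :: "nat \<Rightarrow> 'a poset \<Rightarrow> 'b poset \<Rightarrow> nat \<Rightarrow> bool" where
  "gr_property k Q P N \<longleftrightarrow>
     (\<forall>c. exact_coloring k N c \<longrightarrow>
        (\<exists>S. induced_copy Q N S \<and> rainbow c S) \<or>
        (\<exists>S. induced_copy P N S \<and> monochromatic c S))"

definition gr_good :: "nat \<Rightarrow> 'a poset \<Rightarrow> 'b poset \<Rightarrow> bool" where
  "gr_good k Q P \<longleftrightarrow> (\<forall>N. N > 0 \<longrightarrow> gr_property k Q P N)"

text \<open>GR_k(Q:P): the smallest n such that the property holds for all N \<ge> n
  (meaningful for pairs that are not good).\<close>
definition GR :: "nat \<Rightarrow> 'a poset \<Rightarrow> 'b poset \<Rightarrow> nat" where
  "GR k Q P = (LEAST n. \<forall>N\<ge>n. gr_property k Q P N)"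

end

(* Call a coloring of B_N rainbow-V_2-free if it has no rainbow induced copy of V_2, and call
   X a middle set if X is neither {} nor [N].  Let X, Y be middle sets whose colors differ from
   each other and from the color of {}.  The V_2 with bottom {} forces X and Y to be comparable,
   say X < Y.  Adding to X a point outside Y yields a set colored like Y, and from this every set
   incomparable with X gets the color of {}; these sets contain a chain of length N.  Hence a
   rainbow-V_2-free coloring has at most two middle colors besides that of {} (so k >= 5 is good),
   with four colors there is a monochromatic chain of length N >= 3, and with three colors either
   this happens or a maximal chain below [N] splits into two monochromatic parts, one of them of
   length s once N >= 2s - 1.  The bounds are sharp: on B_(2s-2) color [N] alone and split the
   other sets by |X| < s - 1; on B_(s-1) give [N], {0}, the other sets containing 0 and the sets
   missing 0 four different colors. *)

theory Submission
  imports Defs "HOL-Library.Infinite_Set"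
begin

definition rainbow_vee_free :: "nat \<Rightarrow> (nat set \<Rightarrow> nat) \<Rightarrow> bool" where
  "rainbow_vee_free N c \<longleftrightarrow>
     (\<forall>X0 X1 X2. X0 \<subset> X1 \<longrightarrow> X0 \<subset> X2 \<longrightarrow> \<not> X1 \<subseteq> X2 \<longrightarrow> \<not> X2 \<subseteq> X1 \<longrightarrow>
        X1 \<subseteq> {0..<N} \<longrightarrow> X2 \<subseteq> {0..<N} \<longrightarrow> c X0 = c X1 \<or> c X0 = c X2 \<or> c X1 = c X2)"

lemma rainbow_vee_freeD:
  assumes "rainbow_vee_free N c" "X0 \<subset> X1" "X0 \<subset> X2" "\<not> X1 \<subseteq> X2" "\<not> X2 \<subseteq> X1"
    "X1 \<subseteq> {0..<N}" "X2 \<subseteq> {0..<N}"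
  shows "c X0 = c X1 \<or> c X0 = c X2 \<or> c X1 = c X2"
  using assms unfolding rainbow_vee_free_def by blast

lemma rainbow_vee_free_iff:
  "rainbow_vee_free N c \<longleftrightarrow> \<not> (\<exists>S. induced_copy vee2 N S \<and> rainbow c S)"
proof
  assume free: "rainbow_vee_free N c"
  show "\<not> (\<exists>S. induced_copy vee2 N S \<and> rainbow c S)"
  proof
    assume "\<exists>S. induced_copy vee2 N S \<and> rainbow c S"
    then obtain f where inj: "inj_on f (fst vee2)" and sub: "f ` fst vee2 \<subseteq> boolean_lattice N"
      and ord: "\<forall>x\<in>fst vee2. \<forall>y\<in>fst vee2. f x \<subseteq> f y \<longleftrightarrow> snd vee2 x y"
      and rb: "rainbow c (f ` fst vee2)"
      unfolding induced_copy_def by blast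
    have distinct: "f 0 \<noteq> f 1" "f 0 \<noteq> f 2" "f 1 \<noteq> f 2"
      using inj by (auto simp: vee2_def intro!: inj_on_contraD)
    with rb have "c (f 0) \<noteq> c (f 1)" "c (f 0) \<noteq> c (f 2)" "c (f 1) \<noteq> c (f 2)"
      unfolding rainbow_def vee2_def by (auto intro!: inj_on_contraD)
    moreover have "f 0 \<subset> f 1" "f 0 \<subset> f 2" "\<not> f 1 \<subseteq> f 2" "\<not> f 2 \<subseteq> f 1"
      using ord distinct by (auto simp: vee2_def)
    moreover have "f 1 \<subseteq> {0..<N}" "f 2 \<subseteq> {0..<N}"
      using sub by (auto simp: vee2_def boolean_lattice_def)
    ultimately show False
      using rainbow_vee_freeD[OF free, of "f 0" "f 1" "f 2"] by blast
  qed
next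
  assume no_copy: "\<not> (\<exists>S. induced_copy vee2 N S \<and> rainbow c S)"
  show "rainbow_vee_free N c"
    unfolding rainbow_vee_free_def
  proof (intro allI impI; rule ccontr)
    fix X0 X1 X2
    assume vee: "X0 \<subset> X1" "X0 \<subset> X2" "\<not> X1 \<subseteq> X2" "\<not> X2 \<subseteq> X1" "X1 \<subseteq> {0..<N}" "X2 \<subseteq> {0..<N}"
      and colors: "\<not> (c X0 = c X1 \<or> c X0 = c X2 \<or> c X1 = c X2)"
    define f where "f i = (if i = 0 then X0 else if i = 1 then X1 else X2)" for i :: nat
    have "induced_copy vee2 N (f ` {0, 1, 2})"
      unfolding induced_copy_def vee2_def boolean_lattice_def fst_conv snd_conv
      using vee by (intro exI[of _ f]) (auto simp: f_def inj_on_def)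
    moreover have "f ` {0, 1, 2} = {X0, X1, X2}"
      by (auto simp: f_def)
    moreover have "rainbow c {X0, X1, X2}"
      using colors by (auto simp: rainbow_def)
    ultimately show False
      using no_copy by auto
  qed
qed

lemma chain_subset_subset_iff_card_le:
  assumes "chain\<^sub>\<subseteq> S" "X \<in> S" "Y \<in> S" "finite X" "finite Y"
  shows "X \<subseteq> Y \<longleftrightarrow> card X \<le> card Y"
proof
  show "X \<subseteq> Y \<Longrightarrow> card X \<le> card Y"
    using assms(5) by (rule card_mono)
  assume "card X \<le> card Y"
  show "X \<subseteq> Y"
  proof (rule ccontr)
    assume "\<not> X \<subseteq> Y"
    with assms(1-3) have "Y \<subset> X"
      unfolding chain_subset_def by blast
    with \<open>finite X\<close> have "card Y < card X"
      by (rule psubset_card_mono)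
    with \<open>card X \<le> card Y\<close> show False
      by simp
  qed
qed

lemma inj_on_card_chain_subset:
  assumes "chain\<^sub>\<subseteq> S" "\<And>X. X \<in> S \<Longrightarrow> finite X"
  shows "inj_on card S"
proof (rule inj_onI)
  fix X Y assume "X \<in> S" "Y \<in> S" "card X = card Y"
  then show "X = Y"
    using chain_subset_subset_iff_card_le[OF assms(1)] assms(2) by (metis order_refl subset_antisym)
qed

lemma induced_copy_chain_poset_iff:
  "induced_copy (chain_poset s) N S \<longleftrightarrow> S \<subseteq> Pow {0..<N} \<and> chain\<^sub>\<subseteq> S \<and> card S = s"
proof
  assume "induced_copy (chain_poset s) N S"
  then obtain f where "inj_on f (fst (chain_poset s))" "f ` fst (chain_poset s) \<subseteq> boolean_lattice N"
    "\<forall>i\<in>fst (chain_poset s). \<forall>j\<in>fst (chain_poset s). f i \<subseteq> f j \<longleftrightarrow> snd (chain_poset s) i j"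
    "S = f ` fst (chain_poset s)"
    unfolding induced_copy_def by blast
  then show "S \<subseteq> Pow {0..<N} \<and> chain\<^sub>\<subseteq> S \<and> card S = s"
    by (auto simp: chain_poset_def boolean_lattice_def chain_subset_def card_image nat_le_linear)
next
  assume S: "S \<subseteq> Pow {0..<N} \<and> chain\<^sub>\<subseteq> S \<and> card S = s"
  have fin: "X \<in> S \<Longrightarrow> finite X" for X
    using S finite_subset by blast
  have inj: "inj_on card S"
    using S fin by (intro inj_on_card_chain_subset) auto
  have "finite S"
    using S finite_subset by (metis finite_Pow_iff finite_atLeastLessThan)
  then have "card (card ` S) = s"
    using S inj by (simp add: card_image)
  then obtain h where h: "bij_betw h {..<s} (card ` S)" "strict_mono_on {..<s} h"
    using ex_bij_betw_strict_mono_card[of "card ` S"] \<open>finite S\<close> by auto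
  define f where "f = the_inv_into S card \<circ> h"
  have bij: "bij_betw f {..<s} S"
    unfolding f_def using h(1) bij_betw_the_inv_into[OF inj_on_imp_bij_betw[OF inj]]
    by (rule bij_betw_trans)
  have card_f: "card (f i) = h i" if "i < s" for i
  proof -
    have "h i \<in> card ` S"
      using h(1) that by (auto dest: bij_betw_apply)
    then show ?thesis
      unfolding f_def by (simp add: f_the_inv_into_f[OF inj])
  qed
  have "f i \<subseteq> f j \<longleftrightarrow> i \<le> j" if "i < s" "j < s" for i j
  proof -
    have "f i \<in> S" "f j \<in> S"
      using bij that by (auto dest: bij_betw_apply)
    then have "f i \<subseteq> f j \<longleftrightarrow> h i \<le> h j"
      using chain_subset_subset_iff_card_le[of S "f i" "f j"] S fin that card_f by auto
    also have "\<dots> \<longleftrightarrow> i \<le> j"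
      using h(2) that by (simp add: strict_mono_on_less_eq)
    finally show ?thesis .
  qed
  then show "induced_copy (chain_poset s) N S"
    unfolding induced_copy_def chain_poset_def boolean_lattice_def fst_conv snd_conv
    using bij S by (intro exI[of _ f]) (auto simp: bij_betw_def atLeast0LessThan)
qed

lemma ex_monochromatic_chain_copy:
  assumes "S \<subseteq> Pow {0..<N}" "chain\<^sub>\<subseteq> S" "s \<le> card S" "monochromatic c S"
  shows "\<exists>S'. induced_copy (chain_poset s) N S' \<and> monochromatic c S'"
proof -
  obtain S' where S': "S' \<subseteq> S" "card S' = s"
    using obtain_subset_with_card_n[OF assms(3)] by blast
  have "chain\<^sub>\<subseteq> S'" "monochromatic c S'"
    using S'(1) assms(2,4) unfolding chain_subset_def monochromatic_def by blast+
  moreover have "S' \<subseteq> Pow {0..<N}"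
    using S'(1) assms(1) by blast
  ultimately show ?thesis
    using S'(2) unfolding induced_copy_chain_poset_iff by blast
qed

lemma ex_maximal_chain:
  assumes "finite U"
  shows "\<exists>C \<subseteq> Pow U. chain\<^sub>\<subseteq> C \<and> card C = Suc (card U)"
  using assms
proof (induction U rule: finite_induct)
  case empty
  show ?case
    by (intro exI[of _ "{{}}"]) (simp add: chain_subset_def)
next
  case (insert u U)
  then obtain C where C: "C \<subseteq> Pow U" "chain\<^sub>\<subseteq> C" "card C = Suc (card U)"
    by blast
  have "insert u U \<notin> C" "finite C"
    using C insert.hyps by (auto intro: finite_subset)
  then show ?case
    using C insert.hyps
    by (intro exI[of _ "insert (insert u U) C"]) (auto simp: chain_subset_def)
qed

definition middle_sets :: "nat \<Rightarrow> nat set set" where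
  "middle_sets N = Pow {0..<N} - {{}, {0..<N}}"

lemma exact_coloring_middle_colors:
  assumes "exact_coloring k N c"
  shows "k \<le> card (c ` middle_sets N - {c {}}) + 2"
proof -
  define C where "C = c ` middle_sets N - {c {}}"
  have "finite C"
    by (simp add: C_def middle_sets_def)
  have "Pow {0..<N} = insert {} (insert {0..<N} (middle_sets N))"
    unfolding middle_sets_def by blast
  with assms have "{1..k} = c ` insert {} (insert {0..<N} (middle_sets N))"
    unfolding exact_coloring_def boolean_lattice_def by simp
  also have "\<dots> \<subseteq> insert (c {}) (insert (c {0..<N}) C)"
    unfolding C_def by blast
  finally have colors: "{1..k} \<subseteq> insert (c {}) (insert (c {0..<N}) C)" .
  have "k = card {1..k}"
    by simp
  also have "\<dots> \<le> card (insert (c {}) (insert (c {0..<N}) C))"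
    using colors \<open>finite C\<close> by (intro card_mono) simp_all
  also have "\<dots> \<le> card C + 2"
    using \<open>finite C\<close> by (simp add: card_insert_if)
  finally show ?thesis
    unfolding C_def .
qed

lemma rainbow_vee_free_comparable:
  assumes free: "rainbow_vee_free N c" and "X \<subseteq> {0..<N}" "Y \<subseteq> {0..<N}"
    and "c X \<noteq> c Y" "c X \<noteq> c {}" "c Y \<noteq> c {}"
  shows "X \<subseteq> Y \<or> Y \<subseteq> X"
proof -
  have "{} \<subset> X" "{} \<subset> Y"
    using assms by auto
  then show ?thesis
    using rainbow_vee_freeD[OF free, of "{}" X Y] assms by auto
qed

lemma rainbow_vee_free_insert_color:
  assumes free: "rainbow_vee_free N c" and XY: "X \<subset> Y" and Y: "Y \<subseteq> {0..<N}" and p: "p \<in> {0..<N} - Y"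
    and colors: "c X \<noteq> c Y" "c X \<noteq> c {}" "c Y \<noteq> c {}"
  shows "c (insert p X) = c Y"
proof (rule ccontr)
  let ?W = "insert p X"
  assume ne: "c ?W \<noteq> c Y"
  have W: "?W \<subseteq> {0..<N}" and incomparable: "\<not> ?W \<subseteq> Y" "\<not> Y \<subseteq> ?W" "X \<subset> ?W"
    using XY Y p by auto
  have "c ?W = c {}"
    using rainbow_vee_free_comparable[OF free W Y ne] incomparable colors by auto
  then show False
    using rainbow_vee_freeD[OF free, of X ?W Y] incomparable XY W Y colors by auto
qed

lemma rainbow_vee_free_no_three_colored_chain:
  assumes free: "rainbow_vee_free N c" and "X \<subset> Y" "Y \<subset> Z" "Z \<subset> {0..<N}"
    and "c X \<noteq> c Y" "c X \<noteq> c Z" "c Y \<noteq> c Z" "c X \<noteq> c {}" "c Y \<noteq> c {}" "c Z \<noteq> c {}"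
  shows False
proof -
  obtain p where p: "p \<in> {0..<N} - Z"
    using assms(4) by blast
  then have "p \<in> {0..<N} - Y"
    using assms(3) by blast
  then have "c (insert p X) = c Y"
    using rainbow_vee_free_insert_color[OF free assms(2)] assms(3-) by auto
  moreover have "c (insert p X) = c Z"
    using rainbow_vee_free_insert_color[OF free _ _ p] assms(2-) by auto
  ultimately show False
    using assms(7) by simp
qed

lemma rainbow_vee_free_incomparable_color:
  assumes free: "rainbow_vee_free N c" and XY: "X \<subset> Y" and Y: "Y \<subset> {0..<N}"
    and colors: "c X \<noteq> c Y" "c X \<noteq> c {}" "c Y \<noteq> c {}"
    and Z: "Z \<subseteq> {0..<N}" "\<not> Z \<subseteq> X" "\<not> X \<subseteq> Z"
  shows "c Z = c {}"
proof (rule ccontr)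
  assume Z_color: "c Z \<noteq> c {}"
  have X: "X \<subseteq> {0..<N}"
    using XY Y by auto
  have "c Z = c X"
    using rainbow_vee_free_comparable[OF free X Z(1)] Z colors Z_color by auto
  have "Z \<subseteq> Y"
    using rainbow_vee_free_comparable[OF free Z(1), of Y] Y XY Z colors \<open>c Z = c X\<close> by auto
  obtain p where p: "p \<in> {0..<N} - Y"
    using Y by blast
  have "c (insert p X) = c Y"
    using rainbow_vee_free_insert_color[OF free XY _ p colors] Y by auto
  moreover have "insert p X \<subseteq> {0..<N}"
    using X p by auto
  ultimately have "Z \<subseteq> insert p X \<or> insert p X \<subseteq> Z"
    using rainbow_vee_free_comparable[OF free Z(1)] \<open>c Z = c X\<close> colors by metis
  then show False
    using \<open>Z \<subseteq> Y\<close> p Z by auto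
qed

lemma rainbow_vee_free_long_chain:
  assumes free: "rainbow_vee_free N c" and XY: "X \<subset> Y" and Y: "Y \<subset> {0..<N}"
    and colors: "c X \<noteq> c Y" "c X \<noteq> c {}" "c Y \<noteq> c {}"
  shows "\<exists>S \<subseteq> Pow {0..<N}. chain\<^sub>\<subseteq> S \<and> card S = N \<and> (\<forall>Z\<in>S. c Z = c {})"
proof -
  obtain x where x: "x \<in> X"
    using colors(2) by (metis ex_in_conv)
  obtain y where y: "y \<in> Y" "y \<notin> X"
    using XY by blast
  have xy: "x \<in> {0..<N}" "y \<in> {0..<N}" "x \<noteq> y"
    using x y XY Y by auto
  obtain C where C: "C \<subseteq> Pow ({0..<N} - {x, y})" "chain\<^sub>\<subseteq> C"
    "card C = Suc (card ({0..<N} - {x, y}))"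
    using ex_maximal_chain[of "{0..<N} - {x, y}"] by auto
  \<comment> \<open>Apart from the empty set, each member of S contains y but not x, so it is incomparable with X.\<close>
  define S where "S = insert {} (insert y ` C)"
  have "card (insert y ` C) = card C"
    using C(1) by (intro card_image inj_onI) blast
  moreover have "{} \<notin> insert y ` C" "finite C"
    using C(1) by (auto intro: finite_subset)
  moreover have "card ({0..<N} - {x, y}) = N - 2"
    using xy by (simp add: card_Diff_subset)
  ultimately have "card S = N"
    using C(3) xy by (simp add: S_def)
  moreover have "chain\<^sub>\<subseteq> S" "S \<subseteq> Pow {0..<N}"
    using C(1,2) xy by (auto simp: S_def chain_subset_def)
  moreover have "c Z = c {}" if "Z \<in> S" for Z
  proof (cases "Z = {}")
    case False
    with that have "y \<in> Z" "x \<notin> Z" "Z \<subseteq> {0..<N}"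
      using C(1) xy by (auto simp: S_def)
    then show ?thesis
      using rainbow_vee_free_incomparable_color[OF free XY Y colors] x y by blast
  qed simp
  ultimately show ?thesis
    by blast
qed

lemma rainbow_vee_free_two_middle_colors:
  assumes free: "rainbow_vee_free N c" and "X \<in> middle_sets N" "Y \<in> middle_sets N"
    and "c X \<noteq> c Y" "c X \<noteq> c {}" "c Y \<noteq> c {}"
  shows "3 \<le> N" and "\<exists>S \<subseteq> Pow {0..<N}. chain\<^sub>\<subseteq> S \<and> card S = N \<and> (\<forall>Z\<in>S. c Z = c {})"
proof -
  have "X \<subseteq> Y \<or> Y \<subseteq> X"
    using assms by (intro rainbow_vee_free_comparable[OF free]) (auto simp: middle_sets_def)
  moreover have "X \<noteq> Y"
    using assms(4) by auto
  ultimately obtain A B where "A \<subset> B" "A \<in> middle_sets N" "B \<in> middle_sets N"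
    and colors: "c A \<noteq> c B" "c A \<noteq> c {}" "c B \<noteq> c {}"
    using assms(2-) by (metis psubsetI)
  then have AB: "A \<subset> B" "B \<subset> {0..<N}" "A \<noteq> {}"
    unfolding middle_sets_def by auto
  have "finite B"
    using AB(2) finite_subset by blast
  then have "0 < card A" "card A < card B" "card B < card {0..<N}"
    using AB psubset_card_mono[OF _ AB(2)]
    by (auto simp: card_gt_0_iff psubset_card_mono intro: finite_subset)
  then show "3 \<le> N"
    by simp
  show "\<exists>S \<subseteq> Pow {0..<N}. chain\<^sub>\<subseteq> S \<and> card S = N \<and> (\<forall>Z\<in>S. c Z = c {})"
    using rainbow_vee_free_long_chain[OF free AB(1,2) colors] .
qed

lemma rainbow_vee_free_card_middle_colors:
  assumes free: "rainbow_vee_free N c"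
  shows "card (c ` middle_sets N - {c {}}) \<le> 2"
proof (rule ccontr)
  assume "\<not> ?thesis"
  then obtain T where "T \<subseteq> c ` middle_sets N - {c {}}" "card T = 3"
    by (metis obtain_subset_with_card_n not_le Suc_leI numeral_2_eq_2 numeral_3_eq_3)
  then obtain X Y Z where middle: "X \<in> middle_sets N" "Y \<in> middle_sets N" "Z \<in> middle_sets N"
    and colors: "c X \<noteq> c Y" "c X \<noteq> c Z" "c Y \<noteq> c Z" "c X \<noteq> c {}" "c Y \<noteq> c {}" "c Z \<noteq> c {}"
    by (auto simp: card_3_iff)
  have comparable: "A \<subset> B \<or> B \<subset> A"
    if "A \<in> middle_sets N" "B \<in> middle_sets N" "c A \<noteq> c B" "c A \<noteq> c {}" "c B \<noteq> c {}" for A B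
    using rainbow_vee_free_comparable[OF free, of A B] that by (auto simp: middle_sets_def)
  have no_chain: False
    if "A \<subset> B" "B \<subset> D" "D \<in> middle_sets N" "c A \<noteq> c B" "c A \<noteq> c D" "c B \<noteq> c D"
      "c A \<noteq> c {}" "c B \<noteq> c {}" "c D \<noteq> c {}" for A B D
    using rainbow_vee_free_no_three_colored_chain[OF free that(1,2) _ that(4-)] that(3)
    by (auto simp: middle_sets_def)
  show False
    using comparable[OF middle(1,2)] comparable[OF middle(1,3)] comparable[OF middle(2,3)]
      no_chain[of X Y Z] no_chain[of X Z Y] no_chain[of Y X Z]
      no_chain[of Y Z X] no_chain[of Z X Y] no_chain[of Z Y X] middle colors
    by (metis (full_types))
qed

lemma rainbow_vee_free_exact_coloring_le_4:
  assumes "exact_coloring k N c" "rainbow_vee_free N c"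
  shows "k \<le> 4"
  using exact_coloring_middle_colors[OF assms(1)] rainbow_vee_free_card_middle_colors[OF assms(2)]
  by linarith

lemma rainbow_vee_free_monochromatic_chain:
  assumes free: "rainbow_vee_free N c" and s: "2 * s \<le> N + 1"
  shows "\<exists>S. induced_copy (chain_poset s) N S \<and> monochromatic c S"
proof (cases "\<exists>X\<in>middle_sets N. \<exists>Y\<in>middle_sets N. c X \<noteq> c Y \<and> c X \<noteq> c {} \<and> c Y \<noteq> c {}")
  case True
  then obtain X Y where "X \<in> middle_sets N" "Y \<in> middle_sets N"
    "c X \<noteq> c Y" "c X \<noteq> c {}" "c Y \<noteq> c {}"
    by blast
  from rainbow_vee_free_two_middle_colors(2)[OF free this] obtain S
    where "S \<subseteq> Pow {0..<N}" "chain\<^sub>\<subseteq> S" "card S = N" "\<forall>Z\<in>S. c Z = c {}"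
    by blast
  then show ?thesis
    using s by (intro ex_monochromatic_chain_copy) (auto simp: monochromatic_def)
next
  case False
  \<comment> \<open>By the case hypothesis B is monochromatic, and A \<union> B has at least N \<ge> 2s - 1 members.\<close>
  obtain C where C: "C \<subseteq> Pow {0..<N}" "chain\<^sub>\<subseteq> C" "card C = Suc N"
    using ex_maximal_chain[of "{0..<N}"] by auto
  define A where "A = {Z \<in> C - {{0..<N}}. c Z = c {}}"
  define B where "B = {Z \<in> C - {{0..<N}}. c Z \<noteq> c {}}"
  have "finite C"
    using C(1) finite_subset by blast
  then have "N \<le> card (C - {{0..<N}})"
    using C(3) by (simp add: card_Diff_singleton_if)
  also have "\<dots> = card A + card B"
    unfolding A_def B_def using \<open>finite C\<close>
    by (subst card_Un_disjoint[symmetric]) (auto intro: arg_cong[where f = card])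
  finally have "s \<le> card A \<or> s \<le> card B"
    using s by linarith
  moreover have A: "A \<subseteq> Pow {0..<N}" "chain\<^sub>\<subseteq> A" "monochromatic c A"
    using C(1,2) by (auto simp: A_def chain_subset_def monochromatic_def)
  moreover have "B \<subseteq> middle_sets N"
    using C(1) by (auto simp: B_def middle_sets_def)
  then have "monochromatic c B"
    using False unfolding monochromatic_def B_def by blast
  moreover have "B \<subseteq> Pow {0..<N}" "chain\<^sub>\<subseteq> B"
    using C(1,2) by (auto simp: B_def chain_subset_def)
  ultimately show ?thesis
    by (metis ex_monochromatic_chain_copy)
qed

lemma gr_property_vee2_iff:
  "gr_property k vee2 P N \<longleftrightarrow>
     (\<forall>c. exact_coloring k N c \<longrightarrow> rainbow_vee_free N c \<longrightarrow>
        (\<exists>S. induced_copy P N S \<and> monochromatic c S))"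
  unfolding gr_property_def rainbow_vee_free_iff by blast

lemma gr_property_vee2_chain:
  assumes "2 * s \<le> N + 1"
  shows "gr_property k vee2 (chain_poset s) N"
  using assms rainbow_vee_free_monochromatic_chain by (simp add: gr_property_vee2_iff)

lemma gr_property_vee2_chain_four_colors:
  assumes "4 \<le> k" "s \<le> max 3 N"
  shows "gr_property k vee2 (chain_poset s) N"
  unfolding gr_property_vee2_iff
proof (intro allI impI)
  fix c assume exact: "exact_coloring k N c" and free: "rainbow_vee_free N c"
  have "2 \<le> card (c ` middle_sets N - {c {}})"
    using exact_coloring_middle_colors[OF exact] assms(1) by linarith
  then obtain T where "T \<subseteq> c ` middle_sets N - {c {}}" "card T = 2"
    by (metis obtain_subset_with_card_n)
  then obtain X Y where "X \<in> middle_sets N" "Y \<in> middle_sets N"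
    "c X \<noteq> c Y" "c X \<noteq> c {}" "c Y \<noteq> c {}"
    by (auto simp: card_2_iff)
  note two_colors = rainbow_vee_free_two_middle_colors[OF free this]
  from two_colors(2) obtain S
    where "S \<subseteq> Pow {0..<N}" "chain\<^sub>\<subseteq> S" "card S = N" "\<forall>Z\<in>S. c Z = c {}"
    by blast
  then show "\<exists>S. induced_copy (chain_poset s) N S \<and> monochromatic c S"
    using assms(2) two_colors(1)
    by (intro ex_monochromatic_chain_copy) (auto simp: monochromatic_def)
qed

lemma gr_property_vee2_five_colors:
  assumes "5 \<le> k"
  shows "gr_property k vee2 P N"
  using assms rainbow_vee_free_exact_coloring_le_4 by (fastforce simp: gr_property_vee2_iff)

lemma exact_coloringI:
  assumes "{1..k} \<subseteq> c ` W" "W \<subseteq> Pow {0..<N}" "c ` Pow {0..<N} \<subseteq> {1..k}"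
  shows "exact_coloring k N c"
  using assms unfolding exact_coloring_def boolean_lattice_def by blast

lemma not_gr_property_3_vee2_chain:
  assumes s: "2 \<le> s"
  shows "\<not> gr_property 3 vee2 (chain_poset s) (2 * s - 2)"
proof -
  define N where "N = 2 * s - 2"
  define c where "c X = (if X = {0..<N} then 3 else if card X < s - 1 then 1 else 2 :: nat)" for X
  have "c {} = 1" "c {0..<s - 1} = 2" "c {0..<N} = 3"
    using s by (auto simp: c_def N_def)
  then have "{1..3} \<subseteq> c ` {{}, {0..<s - 1}, {0..<N}}"
    by auto
  then have "exact_coloring 3 N c"
    by (rule exact_coloringI) (auto simp: c_def N_def)
  \<comment> \<open>No member of an induced copy of vee2 is the top set, and only two colors remain below it.\<close>
  moreover have "rainbow_vee_free N c"
    unfolding rainbow_vee_free_def c_def by auto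
  moreover have "\<not> (\<exists>S. induced_copy (chain_poset s) N S \<and> monochromatic c S)"
  proof
    assume "\<exists>S. induced_copy (chain_poset s) N S \<and> monochromatic c S"
    then obtain S where S: "S \<subseteq> Pow {0..<N}" "chain\<^sub>\<subseteq> S" "card S = s" "monochromatic c S"
      unfolding induced_copy_chain_poset_iff by blast
    have sizes: "card (card ` S) = s"
      using S(1-3)
      by (subst card_image) (auto intro!: inj_on_card_chain_subset intro: finite_subset)
    obtain Z0 where "Z0 \<in> S"
      using S(3) s by fastforce
    have same: "\<forall>Z\<in>S. c Z = c Z0"
      using S(4) \<open>Z0 \<in> S\<close> unfolding monochromatic_def by blast
    have "c Z0 = 1 \<or> c Z0 = 2 \<or> c Z0 = 3"
      by (simp add: c_def)
    then consider "\<forall>Z\<in>S. c Z = 1" | "\<forall>Z\<in>S. c Z = 2" | "\<forall>Z\<in>S. c Z = 3"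
      using same by metis
    then show False
    proof cases
      case 1
      then have "card ` S \<subseteq> {..<s - 1}"
        by (auto simp: c_def split: if_splits)
      then show False
        using card_mono[of "{..<s - 1}" "card ` S"] sizes s by simp
    next
      case 2
      have "card Z < N" if "Z \<in> S" for Z
      proof -
        have "Z \<subset> {0..<N}"
          using that 2 S(1) by (force simp: c_def)
        then show ?thesis
          using psubset_card_mono[of "{0..<N}" Z] by simp
      qed
      with 2 have "card ` S \<subseteq> {s - 1..<N}"
        by (fastforce simp: c_def split: if_splits)
      then show False
        using card_mono[of "{s - 1..<N}" "card ` S"] sizes s by (simp add: N_def)
    next
      case 3
      then have "S \<subseteq> {{0..<N}}"
        by (auto simp: c_def split: if_splits)
      then show False
        using card_mono[of "{{0..<N}}" S] S(3) s by simp
    qed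
  qed
  ultimately show ?thesis
    unfolding gr_property_vee2_iff N_def by blast
qed

lemma not_gr_property_4_vee2_chain:
  assumes s: "4 \<le> s"
  shows "\<not> gr_property 4 vee2 (chain_poset s) (s - 1)"
proof -
  define N where "N = s - 1"
  define c where
    "c X = (if X = {0..<N} then 4 else if X = {0} then 3 else if 0 \<in> X then 2 else 1 :: nat)" for X
  have two: "2 \<in> {0..<N}"
    using s by (simp add: N_def)
  then have "X \<noteq> {0..<N}" if "2 \<notin> X" for X
    using that by blast
  then have "c {} = 1" "c {0, 1} = 2" "c {0} = 3" "c {0..<N} = 4"
    using two by (simp_all add: c_def)
  then have "{1..4} \<subseteq> c ` {{}, {0, 1}, {0}, {0..<N}}"
    by auto
  then have "exact_coloring 4 N c"
    by (rule exact_coloringI) (use two in \<open>auto simp: c_def\<close>)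
  moreover have "rainbow_vee_free N c"
    unfolding rainbow_vee_free_def
  proof (intro allI impI)
    fix X0 X1 X2
    assume vee: "X0 \<subset> X1" "X0 \<subset> X2" "\<not> X1 \<subseteq> X2" "\<not> X2 \<subseteq> X1" "X1 \<subseteq> {0..<N}" "X2 \<subseteq> {0..<N}"
    then have top: "X0 \<noteq> {0..<N}" "X1 \<noteq> {0..<N}" "X2 \<noteq> {0..<N}"
      by auto
    show "c X0 = c X1 \<or> c X0 = c X2 \<or> c X1 = c X2"
    proof (cases "0 \<in> X1 \<and> 0 \<in> X2")
      case True
      with vee(3,4) have "X1 \<noteq> {0}" "X2 \<noteq> {0}"
        by auto
      with True top show ?thesis
        by (simp add: c_def)
    next
      case False
      with vee(1,2) have "0 \<notin> X0"
        by auto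
      with False top show ?thesis
        by (auto simp: c_def)
    qed
  qed
  moreover have "\<not> (\<exists>S. induced_copy (chain_poset s) N S \<and> monochromatic c S)"
  proof
    assume "\<exists>S. induced_copy (chain_poset s) N S \<and> monochromatic c S"
    then obtain S where S: "S \<subseteq> Pow {0..<N}" "chain\<^sub>\<subseteq> S" "card S = s" "monochromatic c S"
      unfolding induced_copy_chain_poset_iff by blast
    \<comment> \<open>A chain of N + 1 subsets of an N-set meets every size, so it contains {} and the top set.\<close>
    have "card Z \<le> N" if "Z \<in> S" for Z
      using that S(1) card_mono[of "{0..<N}" Z] by auto
    then have "card ` S \<subseteq> {..N}"
      by auto
    moreover have "card (card ` S) = card {..N}"
      using S(1-3) s
      by (subst card_image) (auto simp: N_def intro!: inj_on_card_chain_subset intro: finite_subset)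
    ultimately have "card ` S = {..N}"
      by (intro card_subset_eq) auto
    then obtain Z0 ZN where Z: "Z0 \<in> S" "card Z0 = 0" "ZN \<in> S" "card ZN = N"
      by (metis atMost_iff imageE le0 order_refl)
    have "Z0 \<subseteq> {0..<N}" "ZN \<subseteq> {0..<N}"
      using Z(1,3) S(1) by blast+
    then have "Z0 = {}" "ZN = {0..<N}"
      using Z(2,4) card_subset_eq[of "{0..<N}" ZN] by (auto simp: finite_subset)
    then have "c Z0 \<noteq> c ZN"
      using \<open>c {} = 1\<close> \<open>c {0..<N} = 4\<close> by simp
    with S(4) Z show False
      unfolding monochromatic_def by blast
  qed
  ultimately show ?thesis
    unfolding gr_property_vee2_iff N_def by blast
qed

lemma GR_eqI:
  assumes "\<And>N. m < N \<Longrightarrow> gr_property k Q P N" "\<not> gr_property k Q P m"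
  shows "GR k Q P = Suc m"
  unfolding GR_def
proof (rule Least_equality)
  show "\<forall>N\<ge>Suc m. gr_property k Q P N"
    using assms(1) by simp
  fix n
  assume "\<forall>N\<ge>n. gr_property k Q P N"
  with assms(2) show "Suc m \<le> n"
    using not_less_eq_eq by blast
qed

theorem theorem1p3:
  shows "(\<forall>s::nat. s \<ge> 2 \<longrightarrow>
            \<not> gr_good 3 vee2 (chain_poset s) \<and> GR 3 vee2 (chain_poset s) = 2 * s - 1)
       \<and> (gr_good 4 vee2 (chain_poset 2) \<and> gr_good 4 vee2 (chain_poset 3)
          \<and> (\<forall>s::nat. s \<ge> 4 \<longrightarrow>
               \<not> gr_good 4 vee2 (chain_poset s) \<and> GR 4 vee2 (chain_poset s) = s))
       \<and> (\<forall>(k::nat) (s::nat). k \<ge> 5 \<and> s \<ge> 2 \<longrightarrow> gr_good k vee2 (chain_poset s))"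
proof (intro conjI allI impI)
  fix s :: nat
  assume s: "2 \<le> s"
  have lower: "\<not> gr_property 3 vee2 (chain_poset s) (2 * s - 2)"
    using s by (rule not_gr_property_3_vee2_chain)
  then show "\<not> gr_good 3 vee2 (chain_poset s)"
    using s unfolding gr_good_def by force
  have "GR 3 vee2 (chain_poset s) = Suc (2 * s - 2)"
    using lower by (intro GR_eqI gr_property_vee2_chain) auto
  then show "GR 3 vee2 (chain_poset s) = 2 * s - 1"
    using s by simp
next
  show "gr_good 4 vee2 (chain_poset 2)" "gr_good 4 vee2 (chain_poset 3)"
    unfolding gr_good_def by (simp_all add: gr_property_vee2_chain_four_colors)
next
  fix s :: nat
  assume s: "4 \<le> s"
  have lower: "\<not> gr_property 4 vee2 (chain_poset s) (s - 1)"
    using s by (rule not_gr_property_4_vee2_chain)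
  then show "\<not> gr_good 4 vee2 (chain_poset s)"
    using s unfolding gr_good_def by force
  have "GR 4 vee2 (chain_poset s) = Suc (s - 1)"
    using lower by (intro GR_eqI gr_property_vee2_chain_four_colors) auto
  then show "GR 4 vee2 (chain_poset s) = s"
    using s by simp
next
  fix k s :: nat
  assume "5 \<le> k \<and> 2 \<le> s"
  then show "gr_good k vee2 (chain_poset s)"
    unfolding gr_good_def by (simp add: gr_property_vee2_five_colors)
qed

end
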